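(* For every $N\ge 5$, \[ \rho(\mathrm{Cir}^4_N,\mathrm{Cir}^2_N)\le \frac{18}{53}, \] where $\mathrm{Cir}^4_N$ is the graph on vertices $1,\dots,N$ arranged in a cycle with each vertex adjacent to the 2 nearest vertices in each cyclic direction, and $\mathrm{Cir}^2_N$ is the cycle graph on the same vertices in the same cyclic order.
   Context: Moran Birth-death process on two graphs (neutral case): $G^A$ and $G^B$ are connected undirected simple graphs on the same vertex set $\{1,\dots,N\}$. Every vertex is occupied by exactly one individual, of type $A$ (mutant) or type $B$ (resident). In each discrete time step, one individual is chosen uniformly at random among all $N$ individuals to reproduce; its offspring (of the same type) replaces the individual at a vertex chosen uniformly at random among the neighbors of the parent's vertex, where neighbors are taken in $G^A$ if the parent is of type $A$ and in $G^B$ if the parent is of type $B$. The all-$A$ and all-$B$ states are absorbing. The fixation probability $\rho(G^A,G^B)$ is the probability that the process reaches the all-$A$ state when started from exactly one type-$A$ individual at a uniformly random vertex, all other vertices of type $B$. *)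

theory Defs
  imports Complex_Main
begin

text \<open>Vertices are 0,...,N-1 (relabelling of 1,...,N). A graph on them is an
adjacency predicate. A configuration is the set of vertices occupied by type A.\<close>

definition nbrs :: "nat \<Rightarrow> (nat \<Rightarrow> nat \<Rightarrow> bool) \<Rightarrow> nat \<Rightarrow> nat set" where
  "nbrs N G u = {v. v < N \<and> G u v}"

definition cdist :: "nat \<Rightarrow> nat \<Rightarrow> nat \<Rightarrow> nat" where
  "cdist N i j = min ((i + N - j) mod N) ((j + N - i) mod N)"

text \<open>Circulant graph Cir^(2k)_N: each vertex adjacent to the k nearest vertices in each
cyclic direction. Cir^4_N = cir N 2, Cir^2_N = cir N 1 (the cycle).\<close>
definition cir :: "nat \<Rightarrow> nat \<Rightarrow> nat \<Rightarrow> nat \<Rightarrow> bool" where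
  "cir N k i j = (i < N \<and> j < N \<and> i \<noteq> j \<and> cdist N i j \<le> k)"

text \<open>Configuration after individual at u reproduces and its offspring replaces v.\<close>
definition update :: "nat set \<Rightarrow> nat \<Rightarrow> nat \<Rightarrow> nat set" where
  "update S u v = (if u \<in> S then insert v S else S - {v})"

text \<open>fixby N GA GB t S = probability that the Birth-death process started in
configuration S is in the all-A configuration at time t.\<close>
fun fixby :: "nat \<Rightarrow> (nat \<Rightarrow> nat \<Rightarrow> bool) \<Rightarrow> (nat \<Rightarrow> nat \<Rightarrow> bool) \<Rightarrow> nat \<Rightarrow> nat set \<Rightarrow> real" where
  "fixby N GA GB 0 S = (if S = {..<N} then 1 else 0)"
| "fixby N GA GB (Suc t) S =
     (if S = {} \<or> S = {..<N} then fixby N GA GB t S else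
      (\<Sum>u<N. let G = (if u \<in> S then GA else GB) in
          \<Sum>v\<in>nbrs N G u. (1 / real N) * (1 / real (card (nbrs N G u))) *
                            fixby N GA GB t (update S u v)))"

text \<open>Probability of eventually reaching the (absorbing) all-A state from S:
limit of the probability of being in it at time t (these events increase in t).\<close>
definition fixprob :: "nat \<Rightarrow> (nat \<Rightarrow> nat \<Rightarrow> bool) \<Rightarrow> (nat \<Rightarrow> nat \<Rightarrow> bool) \<Rightarrow> nat set \<Rightarrow> real" where
  "fixprob N GA GB S = lim (\<lambda>t. fixby N GA GB t S)"

definition rho :: "nat \<Rightarrow> (nat \<Rightarrow> nat \<Rightarrow> bool) \<Rightarrow> (nat \<Rightarrow> nat \<Rightarrow> bool) \<Rightarrow> real" where
  "rho N GA GB = (\<Sum>i<N. fixprob N GA GB {i}) / real N"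

end

theory Submission
  imports Defs
begin

text \<open>
  The probability of having fixed by time t is bounded by any function \<phi> of configurations that
  is nonnegative, at least 1 on the all-A state and superharmonic for the process: the expected
  value of \<phi> after one step is at most its current value. For Cir^4 mutants among Cir^2 residents
  such a \<phi> depends only on the local shape of the mutant set: 18/53 for a single mutant, 39/53
  and 33/53 for two mutants at cyclic distance 1 and 2, and 1 otherwise. Reproduction of a
  resident with no mutant neighbour leaves the configuration unchanged, so superharmonicity
  reduces to three computations around the mutants, and these constants make all three hold
  with equality.
\<close>

section \<open>Cyclic shifts\<close>

definition shift :: "nat \<Rightarrow> nat \<Rightarrow> int \<Rightarrow> nat" where
  "shift N a k = nat ((int a + k) mod int N)"

lemma of_nat_shift: "0 < N \<Longrightarrow> int (shift N a k) = (int a + k) mod int N"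
  by (simp add: shift_def)

lemma shift_less: "0 < N \<Longrightarrow> shift N a k < N"
  by (simp add: shift_def nat_less_iff)

lemma shift_zero: "a < N \<Longrightarrow> shift N a 0 = a"
  by (simp add: shift_def)

lemma shift_shift: "0 < N \<Longrightarrow> shift N (shift N a j) k = shift N a (j + k)"
  by (simp add: shift_def mod_add_left_eq add.assoc)

lemma shift_mod_diff: "y < N \<Longrightarrow> shift N x ((int y - int x) mod int N) = y"
  by (simp add: shift_def mod_add_right_eq)

lemma shift_eq_shift_iff: "0 < N \<Longrightarrow> shift N a j = shift N a k \<longleftrightarrow> int N dvd j - k"
proof -
  assume "0 < N"
  then have "shift N a j = shift N a k \<longleftrightarrow> (int a + j) mod int N = (int a + k) mod int N"
    by (metis of_nat_shift of_nat_eq_iff)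
  also have "\<dots> \<longleftrightarrow> int N dvd j - k"
    by (simp add: mod_eq_dvd_iff)
  finally show ?thesis .
qed

lemma shift_eq_shift_iff_small: "\<bar>j - k\<bar> < int N \<Longrightarrow> shift N a j = shift N a k \<longleftrightarrow> j = k"
proof
  assume lt: "\<bar>j - k\<bar> < int N" and eq: "shift N a j = shift N a k"
  then have "int N dvd \<bar>j - k\<bar>"
    using shift_eq_shift_iff[of N a j k] by simp
  then show "j = k"
    using lt zdvd_imp_le[of "int N" "\<bar>j - k\<bar>"] by (cases "j = k") auto
qed simp

lemma diff_shift_mod: "0 < N \<Longrightarrow> (int (shift N a j) - int (shift N a k)) mod int N = (j - k) mod int N"
  by (simp add: of_nat_shift mod_diff_eq)

lemma of_nat_cdist:
  "x < N \<Longrightarrow> y < N \<Longrightarrow> int (cdist N x y) = min ((int x - int y) mod int N) ((int y - int x) mod int N)"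
proof -
  assume "x < N" "y < N"
  then have "int ((x + N - y) mod N) = (int x - int y) mod int N"
    and "int ((y + N - x) mod N) = (int y - int x) mod int N"
    by (simp_all add: of_nat_mod of_nat_diff diff_add_eq[symmetric])
  then show ?thesis by (simp add: cdist_def of_nat_min)
qed

lemma cdist_shift_shift:
  "0 < N \<Longrightarrow> int (cdist N (shift N a j) (shift N a k)) = min ((j - k) mod int N) ((k - j) mod int N)"
  by (simp add: of_nat_cdist shift_less diff_shift_mod)

lemma min_mod_uminus:
  fixes d n :: int
  assumes "2 * \<bar>d\<bar> \<le> n" "0 < n"
  shows "min (d mod n) ((- d) mod n) = \<bar>d\<bar>"
proof -
  have nonneg: "min (e mod n) ((- e) mod n) = e" if "0 \<le> e" "2 * e \<le> n" for e
  proof (cases "e = 0")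
    case False
    then have "e mod n = e" and "(- e) mod n = n - e"
      using that \<open>0 < n\<close> by (simp_all add: zmod_zminus1_eq_if)
    then show ?thesis using that by simp
  qed simp
  show ?thesis
  proof (cases "0 \<le> d")
    case True
    then show ?thesis using nonneg[of d] assms by simp
  next
    case False
    then have "min ((- d) mod n) (- (- d) mod n) = - d" using nonneg[of "- d"] assms by simp
    then show ?thesis using False by (simp add: min.commute)
  qed
qed

lemma cdist_shift_shift_small:
  "0 < N \<Longrightarrow> 2 * \<bar>j - k\<bar> \<le> int N \<Longrightarrow> cdist N (shift N a j) (shift N a k) = nat \<bar>j - k\<bar>"
proof -
  assume N: "0 < N" and small: "2 * \<bar>j - k\<bar> \<le> int N"
  have "int (cdist N (shift N a j) (shift N a k)) = \<bar>j - k\<bar>"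
    using cdist_shift_shift[OF N, of a j k] min_mod_uminus[OF small] N
    by (simp only: minus_diff_eq of_nat_0_less_iff)
  then show ?thesis by linarith
qed

lemma of_nat_cdist_shift:
  "x < N \<Longrightarrow> 0 < d \<Longrightarrow> d < int N \<Longrightarrow> int (cdist N x (shift N x d)) = min (int N - d) d"
  using cdist_shift_shift[of N x 0 d] by (simp add: shift_zero zmod_zminus1_eq_if)

section \<open>Circulant neighbourhoods\<close>

lemma cir_sym: "cir N k x y = cir N k y x"
  unfolding cir_def cdist_def by auto

lemma nbrs_cir:
  assumes N: "2 * k < N" and x: "x < N"
  shows "nbrs N (cir N k) x = shift N x ` ({- int k..int k} - {0})"
proof -
  have N0: "0 < N" and x0: "shift N x 0 = x"
    using N x by (simp_all add: shift_zero)
  have "y \<in> shift N x ` ({- int k..int k} - {0})" if "y \<in> nbrs N (cir N k) x" for y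
  proof -
    from that have y: "y < N" "y \<noteq> x" "cdist N x y \<le> k"
      by (auto simp: nbrs_def cir_def)
    define d where "d = (int y - int x) mod int N"
    have yd: "y = shift N x d"
      unfolding d_def using y(1) by (simp add: shift_mod_diff)
    have "d \<noteq> 0" using y(2) x0 yd by auto
    moreover have "0 \<le> d" "d < int N"
      unfolding d_def using N0 by simp_all
    ultimately have d: "0 < d" "d < int N" by simp_all
    have "int (cdist N x y) = min (int N - d) d"
      using of_nat_cdist_shift[OF x d] yd by simp
    then have "d \<le> int k \<or> int N - d \<le> int k"
      using y(3) by linarith
    then show ?thesis
    proof
      assume "d \<le> int k"
      then show ?thesis using d yd by auto
    next
      assume "int N - d \<le> int k"
      moreover have "shift N x (d - int N) = y"
        using yd shift_eq_shift_iff[OF N0, of x "d - int N" d] by simp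
      ultimately show ?thesis using d by force
    qed
  qed
  moreover have "y \<in> nbrs N (cir N k) x" if "y \<in> shift N x ` ({- int k..int k} - {0})" for y
  proof -
    from that obtain d where "d \<in> {- int k..int k} - {0}" and yd: "y = shift N x d"
      by blast
    then have d: "d \<noteq> 0" "\<bar>d\<bar> \<le> int k"
      by auto
    have "cdist N x y = nat \<bar>d\<bar>"
      using cdist_shift_shift_small[OF N0, of 0 d x] d N x0 yd by simp
    moreover have "y \<noteq> x"
      using shift_eq_shift_iff_small[of d 0 N x] d N x0 yd by simp
    ultimately show ?thesis
      using d yd N0 x by (simp add: nbrs_def cir_def shift_less)
  qed
  ultimately show ?thesis by blast
qed

lemma nbrs_cir_shift:
  "2 * k < N \<Longrightarrow> nbrs N (cir N k) (shift N a j) = (\<lambda>d. shift N a (j + d)) ` ({- int k..int k} - {0})"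
  by (simp add: nbrs_cir shift_less shift_shift image_image)

lemma nbrs_cycle_shift:
  assumes "3 \<le> N"
  shows "nbrs N (cir N 1) (shift N a j) = {shift N a (j + 1), shift N a (j - 1)}"
proof -
  have "{- 1..1::int} - {0} = {1, - 1}" by auto
  then show ?thesis using nbrs_cir_shift[of 1 N a j] assms by simp
qed

lemma nbrs_cir2_shift:
  assumes "5 \<le> N"
  shows "nbrs N (cir N 2) (shift N a j)
    = {shift N a (j + 1), shift N a (j - 1), shift N a (j + 2), shift N a (j - 2)}"
proof -
  have "{- 2..2::int} - {0} = {1, - 1, 2, - 2}" by auto
  then show ?thesis using nbrs_cir_shift[of 2 N a j] assms by simp
qed

section \<open>Superharmonic bounds on fixation\<close>

definition offspring_mean ::
    "nat \<Rightarrow> (nat \<Rightarrow> nat \<Rightarrow> bool) \<Rightarrow> (nat \<Rightarrow> nat \<Rightarrow> bool) \<Rightarrow> (nat set \<Rightarrow> real) \<Rightarrow> nat set \<Rightarrow> nat \<Rightarrow> real" where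
  "offspring_mean N GA GB f S u =
     (let G = if u \<in> S then GA else GB
      in (\<Sum>v\<in>nbrs N G u. f (update S u v)) / real (card (nbrs N G u)))"

lemma fixby_Suc_nonabsorbing:
  "S \<noteq> {} \<Longrightarrow> S \<noteq> {..<N} \<Longrightarrow>
    fixby N GA GB (Suc t) S = (\<Sum>u<N. offspring_mean N GA GB (fixby N GA GB t) S u) / real N"
  by (simp add: offspring_mean_def Let_def sum_divide_distrib mult.commute)

lemma update_subset: "S \<subseteq> {..<N} \<Longrightarrow> v < N \<Longrightarrow> update S u v \<subseteq> {..<N}"
  by (auto simp: update_def)

lemma sum_divide_card_le:
  fixes x :: "'a \<Rightarrow> real"
  assumes "\<And>v. v \<in> A \<Longrightarrow> x v \<le> c" "0 \<le> c"
  shows "sum x A / real (card A) \<le> c"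
proof (cases "finite A \<and> A \<noteq> {}")
  case True
  then have "sum x A \<le> real (card A) * c"
    using sum_bounded_above[of A x c] assms(1) by simp
  then show ?thesis using True by (simp add: divide_le_eq mult.commute)
qed (use assms in auto)

lemma offspring_mean_mono:
  assumes "S \<subseteq> {..<N}" "\<And>T. T \<subseteq> {..<N} \<Longrightarrow> f T \<le> g T"
  shows "offspring_mean N GA GB f S u \<le> offspring_mean N GA GB g S u"
  unfolding offspring_mean_def Let_def
  by (intro divide_right_mono sum_mono assms(2) update_subset[OF assms(1)]) (auto simp: nbrs_def)

lemma offspring_mean_le:
  "(\<And>T. f T \<le> c) \<Longrightarrow> 0 \<le> c \<Longrightarrow> offspring_mean N GA GB f S u \<le> c"
  unfolding offspring_mean_def Let_def by (rule sum_divide_card_le)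

lemma offspring_mean_unaffected:
  assumes "u \<notin> S" "\<forall>v \<in> nbrs N GB u. v \<notin> S" "0 \<le> f S"
  shows "offspring_mean N GA GB f S u \<le> f S"
  using assms unfolding offspring_mean_def Let_def update_def by (auto intro: sum_divide_card_le)

lemma fixby_nonneg: "0 \<le> fixby N GA GB t S"
  by (induction t arbitrary: S) (auto simp: Let_def intro!: sum_nonneg)

lemma fixby_mono: "S \<subseteq> {..<N} \<Longrightarrow> fixby N GA GB t S \<le> fixby N GA GB (Suc t) S"
proof (induction t arbitrary: S)
  case 0
  show ?case
  proof (cases "S = {..<N}")
    case False
    then have "fixby N GA GB 0 S = 0" by simp
    then show ?thesis using fixby_nonneg[of N GA GB "Suc 0" S] by linarith
  qed simp
next
  case (Suc t)
  show ?case
  proof (cases "S = {} \<or> S = {..<N}")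
    case False
    then have "S \<noteq> {}" "S \<noteq> {..<N}" by auto
    then show ?thesis
      unfolding fixby_Suc_nonabsorbing[OF \<open>S \<noteq> {}\<close> \<open>S \<noteq> {..<N}\<close>]
      using Suc by (intro divide_right_mono sum_mono offspring_mean_mono) auto
  qed (use Suc in auto)
qed

lemma fixby_le_superharmonic:
  assumes nonneg: "\<And>S. S \<subseteq> {..<N} \<Longrightarrow> 0 \<le> phi S"
    and absorbing: "1 \<le> phi {..<N}"
    and superharmonic: "\<And>S. S \<subseteq> {..<N} \<Longrightarrow> S \<noteq> {} \<Longrightarrow> S \<noteq> {..<N} \<Longrightarrow>
          (\<Sum>u<N. offspring_mean N GA GB phi S u) \<le> real N * phi S"
  shows "S \<subseteq> {..<N} \<Longrightarrow> fixby N GA GB t S \<le> phi S"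
proof (induction t arbitrary: S)
  case 0
  then show ?case using nonneg absorbing by simp
next
  case (Suc t)
  show ?case
  proof (cases "S = {} \<or> S = {..<N}")
    case False
    then have "0 < N" using Suc.prems by (intro Nat.gr0I) auto
    have "fixby N GA GB (Suc t) S = (\<Sum>u<N. offspring_mean N GA GB (fixby N GA GB t) S u) / real N"
      using False by (intro fixby_Suc_nonabsorbing) auto
    also have "\<dots> \<le> (\<Sum>u<N. offspring_mean N GA GB phi S u) / real N"
      using Suc by (intro divide_right_mono sum_mono offspring_mean_mono) auto
    also have "\<dots> \<le> phi S"
      using superharmonic[OF Suc.prems] False \<open>0 < N\<close> by (simp add: divide_le_eq mult.commute)
    finally show ?thesis .
  qed (use Suc in auto)
qed

lemma fixprob_le:
  assumes "S \<subseteq> {..<N}" "\<And>t. fixby N GA GB t S \<le> c"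
  shows "fixprob N GA GB S \<le> c"
proof -
  have "incseq (\<lambda>t. fixby N GA GB t S)"
    using assms(1) by (intro incseq_SucI fixby_mono)
  then obtain L where "(\<lambda>t. fixby N GA GB t S) \<longlonglongrightarrow> L"
    using incseq_convergent assms(2) by blast
  then show ?thesis
    unfolding fixprob_def using assms(2) by (simp add: limI LIMSEQ_le_const2)
qed

lemma rho_le:
  assumes "0 < N" "\<And>i. i < N \<Longrightarrow> fixprob N GA GB {i} \<le> c"
  shows "rho N GA GB \<le> c"
proof -
  have "(\<Sum>i<N. fixprob N GA GB {i}) \<le> real N * c"
    using sum_bounded_above[of "{..<N}" "\<lambda>i. fixprob N GA GB {i}" c] assms(2) by simp
  then show ?thesis
    unfolding rho_def using assms(1) by (simp add: divide_le_eq mult.commute)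
qed

lemma sum_offspring_mean_le_local:
  assumes R: "R \<subseteq> {..<N}" and SR: "S \<subseteq> R"
    and closed: "\<And>s u. s \<in> S \<Longrightarrow> u \<in> nbrs N GB s \<Longrightarrow> u \<in> R"
    and symmetric: "\<And>u v. GB u v \<Longrightarrow> GB v u"
    and nonneg: "0 \<le> f S"
    and local: "(\<Sum>u\<in>R. offspring_mean N GA GB f S u) \<le> real (card R) * f S"
  shows "(\<Sum>u<N. offspring_mean N GA GB f S u) \<le> real N * f S"
proof -
  have finR: "finite R" using R finite_subset by blast
  have outside: "offspring_mean N GA GB f S u \<le> f S" if "u \<in> {..<N} - R" for u
  proof (rule offspring_mean_unaffected)
    show "u \<notin> S" using that SR by blast
    show "\<forall>v \<in> nbrs N GB u. v \<notin> S"
      using that closed symmetric by (auto simp: nbrs_def)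
  qed (rule nonneg)
  have "(\<Sum>u<N. offspring_mean N GA GB f S u)
      = (\<Sum>u\<in>R. offspring_mean N GA GB f S u) + (\<Sum>u\<in>{..<N} - R. offspring_mean N GA GB f S u)"
    using R by (simp add: sum.subset_diff[of R "{..<N}"])
  also have "\<dots> \<le> real (card R) * f S + real (card ({..<N} - R)) * f S"
    using local sum_bounded_above[of "{..<N} - R" _ "f S"] outside by (intro add_mono) auto
  also have "\<dots> = real N * f S"
    using R finR card_mono[OF finite_lessThan R] by (simp add: card_Diff_subset of_nat_diff algebra_simps)
  finally show ?thesis .
qed

section \<open>A potential for Cir^4 mutants among Cir^2 residents\<close>

lemma shift_eq_shift_iff_5:
  "5 \<le> N \<Longrightarrow> \<bar>j - k\<bar> \<le> 4 \<Longrightarrow> shift N a j = shift N a k \<longleftrightarrow> j = k"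
  by (simp add: shift_eq_shift_iff_small)

lemma cdist_shift_shift_5:
  "5 \<le> N \<Longrightarrow> \<bar>j - k\<bar> \<le> 2 \<Longrightarrow> cdist N (shift N a j) (shift N a k) = nat \<bar>j - k\<bar>"
  by (simp add: cdist_shift_shift_small)

definition cir_potential :: "nat \<Rightarrow> nat set \<Rightarrow> real" where
  "cir_potential N S =
     (if card S = 0 then 0
      else if card S = 1 then 18/53
      else if card S = 2 then
        (if cdist N (Min S) (Max S) = 1 then 39/53 else if cdist N (Min S) (Max S) = 2 then 33/53 else 1)
      else 1)"

lemma cir_potential_empty [simp]: "cir_potential N {} = 0"
  by (simp add: cir_potential_def)

lemma cir_potential_singleton [simp]: "cir_potential N {x} = 18/53"
  by (simp add: cir_potential_def)

lemma cir_potential_pair: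
  "x \<noteq> y \<Longrightarrow>
    cir_potential N {x, y} = (if cdist N x y = 1 then 39/53 else if cdist N x y = 2 then 33/53 else 1)"
  by (cases "x \<le> y") (auto simp: cir_potential_def cdist_def max_def min_def)

lemma cir_potential_card_ge_3: "3 \<le> card S \<Longrightarrow> cir_potential N S = 1"
  by (simp add: cir_potential_def)

lemma cir_potential_nonneg: "0 \<le> cir_potential N S"
  by (simp add: cir_potential_def)

lemma cir_potential_le_one: "cir_potential N S \<le> 1"
  by (simp add: cir_potential_def)

lemma cir_potential_univ: "3 \<le> N \<Longrightarrow> cir_potential N {..<N} = 1"
  by (simp add: cir_potential_card_ge_3)

abbreviation potential_mean :: "nat \<Rightarrow> nat set \<Rightarrow> nat \<Rightarrow> real" where
  "potential_mean N \<equiv> offspring_mean N (cir N 2) (cir N 1) (cir_potential N)"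

lemma offspring_mean_mutant:
  "u \<in> S \<Longrightarrow>
    offspring_mean N GA GB f S u = (\<Sum>v\<in>nbrs N GA u. f (insert v S)) / real (card (nbrs N GA u))"
  by (simp add: offspring_mean_def update_def)

lemma offspring_mean_resident:
  "u \<notin> S \<Longrightarrow>
    offspring_mean N GA GB f S u = (\<Sum>v\<in>nbrs N GB u. f (S - {v})) / real (card (nbrs N GB u))"
  by (simp add: offspring_mean_def update_def)

text \<open>The simplifier rewrites the literal \<open>1 :: nat\<close> to \<open>Suc 0\<close>, hence the unfolded variant.\<close>
lemmas potential_mean_simps =
  offspring_mean_mutant offspring_mean_resident nbrs_cycle_shift[unfolded One_nat_def] nbrs_cir2_shift
  shift_eq_shift_iff_5 cdist_shift_shift_5 cir_potential_pair cir_potential_card_ge_3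
  insert_Diff_if card_insert_if insert_commute

lemma potential_harmonic_singleton:
  fixes N a :: nat
  assumes N: "5 \<le> N"
  defines "S \<equiv> {shift N a 0}"
  shows "(\<Sum>u\<in>{shift N a 0, shift N a 1, shift N a (-1)}. potential_mean N S u)
    = real (card {shift N a 0, shift N a 1, shift N a (-1)}) * cir_potential N S"
proof -
  have "potential_mean N S (shift N a 0) = 36/53"
    and "potential_mean N S (shift N a 1) = 9/53"
    and "potential_mean N S (shift N a (-1)) = 9/53"
    using N by (simp_all add: S_def potential_mean_simps)
  moreover have "distinct [shift N a 0, shift N a 1, shift N a (-1)]"
    using N by (simp add: shift_eq_shift_iff_5)
  ultimately show ?thesis by (simp add: S_def)
qed

lemma potential_harmonic_adjacent:
  fixes N a :: nat
  assumes N: "5 \<le> N"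
  defines "S \<equiv> {shift N a 0, shift N a 1}"
  shows "(\<Sum>u\<in>{shift N a 0, shift N a 1, shift N a (-1), shift N a 2}. potential_mean N S u)
    = real (card {shift N a 0, shift N a 1, shift N a (-1), shift N a 2}) * cir_potential N S"
proof -
  have "potential_mean N S (shift N a 0) = 99/106"
    and "potential_mean N S (shift N a 1) = 99/106"
    and "potential_mean N S (shift N a (-1)) = 57/106"
    and "potential_mean N S (shift N a 2) = 57/106"
    using N by (simp_all add: S_def potential_mean_simps)
  moreover have "distinct [shift N a 0, shift N a 1, shift N a (-1), shift N a 2]"
    using N by (simp add: shift_eq_shift_iff_5)
  moreover have "cir_potential N S = 39/53"
    using N by (simp add: S_def shift_eq_shift_iff_5 cir_potential_pair cdist_shift_shift_5)
  ultimately show ?thesis by simp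
qed

lemma potential_harmonic_gap:
  fixes N a :: nat
  assumes N: "5 \<le> N"
  defines "S \<equiv> {shift N a 0, shift N a 2}"
  shows "(\<Sum>u\<in>{shift N a 0, shift N a 2, shift N a (-1), shift N a 1, shift N a 3}. potential_mean N S u)
    = real (card {shift N a 0, shift N a 2, shift N a (-1), shift N a 1, shift N a 3}) * cir_potential N S"
proof -
  have "potential_mean N S (shift N a 0) = 48/53"
    and "potential_mean N S (shift N a 2) = 48/53"
    and "potential_mean N S (shift N a (-1)) = 51/106"
    and "potential_mean N S (shift N a 1) = 18/53"
    and "potential_mean N S (shift N a 3) = 51/106"
    using N by (simp_all add: S_def potential_mean_simps)
  moreover have "distinct [shift N a 0, shift N a 2, shift N a (-1), shift N a 1, shift N a 3]"
    using N by (simp add: shift_eq_shift_iff_5)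
  moreover have "cir_potential N S = 33/53"
    using N by (simp add: S_def shift_eq_shift_iff_5 cir_potential_pair cdist_shift_shift_5)
  ultimately show ?thesis by simp
qed

lemma pair_eq_shifts:
  assumes x: "x < N" and y: "y < N" and xy: "x \<noteq> y" and k: "cdist N x y = k" "2 * k < N"
  shows "\<exists>a. {x, y} = {shift N a 0, shift N a (int k)}"
proof -
  have N0: "0 < N" using k(2) by simp
  have "y \<in> nbrs N (cir N k) x"
    using x y xy k by (simp add: nbrs_def cir_def)
  then obtain d where "d \<in> {- int k..int k} - {0}" and yd: "y = shift N x d"
    using nbrs_cir[OF k(2) x] by blast
  then have "2 * \<bar>0 - d\<bar> \<le> int N" using k(2) by auto
  then have "nat \<bar>d\<bar> = k"
    using cdist_shift_shift_small[OF N0, of 0 d x] k(1) x yd by (simp add: shift_zero)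
  then consider "d = int k" | "d = - int k" by linarith
  then show ?thesis
  proof cases
    case 1
    then show ?thesis using x yd by (metis shift_zero)
  next
    case 2
    then have "shift N y (int k) = x"
      using yd x N0 by (simp add: shift_shift shift_zero)
    then show ?thesis using y by (metis shift_zero insert_commute)
  qed
qed

lemma cir_configuration_cases:
  assumes N: "5 \<le> N" and S: "S \<subseteq> {..<N}" "S \<noteq> {}"
  obtains (singleton) a where "S = {shift N a 0}"
    | (adjacent) a where "S = {shift N a 0, shift N a 1}"
    | (gap) a where "S = {shift N a 0, shift N a 2}"
    | (saturated) "cir_potential N S = 1"
proof -
  have "card S \<noteq> 0" using S finite_subset by fastforce
  then consider "card S = 1" | "card S = 2" | "3 \<le> card S" by linarith
  then show ?thesis
  proof cases
    case 1
    then obtain x where "S = {x}" by (rule card_1_singletonE)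
    then show ?thesis using S by (intro singleton[of x]) (simp add: shift_zero)
  next
    case 2
    then obtain x y where xy: "S = {x, y}" "x \<noteq> y" by (rule card_2_iff[THEN iffD1, elim_format]) blast
    have "x < N" "y < N" using S xy by auto
    consider "cdist N x y = 1" | "cdist N x y = 2" | "cdist N x y \<noteq> 1" "cdist N x y \<noteq> 2"
      by blast
    then show ?thesis
    proof cases
      case 1
      with pair_eq_shifts[OF \<open>x < N\<close> \<open>y < N\<close> xy(2) this] N show ?thesis
        using adjacent xy(1) by auto
    next
      case 2
      with pair_eq_shifts[OF \<open>x < N\<close> \<open>y < N\<close> xy(2) this] N show ?thesis
        using gap xy(1) by auto
    next
      case 3
      then show ?thesis using xy by (intro saturated) (simp add: cir_potential_pair)
    qed
  next
    case 3
    then show ?thesis by (intro saturated cir_potential_card_ge_3)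
  qed
qed

lemma potential_superharmonic_of_local:
  assumes N: "5 \<le> N" and S: "S = shift N a ` J" and R: "R = shift N a ` K"
    and "J \<subseteq> K" and closed: "\<And>j. j \<in> J \<Longrightarrow> j + 1 \<in> K \<and> j - 1 \<in> K"
    and local: "(\<Sum>u\<in>R. potential_mean N S u) = real (card R) * cir_potential N S"
  shows "(\<Sum>u<N. potential_mean N S u) \<le> real N * cir_potential N S"
proof (rule sum_offspring_mean_le_local)
  have N0: "0 < N" using N by simp
  show "R \<subseteq> {..<N}" using R N0 by (auto simp: shift_less)
  show "S \<subseteq> R" using S R \<open>J \<subseteq> K\<close> by auto
  show "u \<in> R" if "s \<in> S" "u \<in> nbrs N (cir N 1) s" for s u
    using that S R closed N nbrs_cycle_shift[of N a] by auto
  show "cir N 1 v u" if "cir N 1 u v" for u v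
    using that cir_sym by blast
  show "(\<Sum>u\<in>R. potential_mean N S u) \<le> real (card R) * cir_potential N S"
    using local by (rule eq_refl)
qed (rule cir_potential_nonneg)

lemma cir_potential_superharmonic:
  assumes N: "5 \<le> N" and S: "S \<subseteq> {..<N}" "S \<noteq> {}"
  shows "(\<Sum>u<N. potential_mean N S u) \<le> real N * cir_potential N S"
  using N S
proof (cases rule: cir_configuration_cases)
  case (singleton a)
  show ?thesis unfolding singleton
    by (rule potential_superharmonic_of_local[OF N _ _ _ _ potential_harmonic_singleton[OF N],
          where J = "{0}" and K = "{0, 1, -1}"]) auto
next
  case (adjacent a)
  show ?thesis unfolding adjacent
    by (rule potential_superharmonic_of_local[OF N _ _ _ _ potential_harmonic_adjacent[OF N],
          where J = "{0, 1}" and K = "{0, 1, -1, 2}"]) auto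
next
  case (gap a)
  show ?thesis unfolding gap
    by (rule potential_superharmonic_of_local[OF N _ _ _ _ potential_harmonic_gap[OF N],
          where J = "{0, 2}" and K = "{0, 2, -1, 1, 3}"]) auto
next
  case saturated
  have "(\<Sum>u<N. potential_mean N S u) \<le> (\<Sum>u<N. 1)"
    by (intro sum_mono offspring_mean_le cir_potential_le_one) simp
  then show ?thesis using saturated by simp
qed

theorem mainTheorem5:
  fixes N :: nat
  assumes "N \<ge> 5"
  shows "rho N (cir N 2) (cir N 1) \<le> 18 / 53"
proof (rule rho_le)
  show "0 < N" using assms by simp
next
  fix i assume "i < N"
  show "fixprob N (cir N 2) (cir N 1) {i} \<le> 18 / 53"
  proof (rule fixprob_le)
    show "{i} \<subseteq> {..<N}" using \<open>i < N\<close> by simp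
  next
    fix t
    have "fixby N (cir N 2) (cir N 1) t {i} \<le> cir_potential N {i}"
      using \<open>i < N\<close> assms
      by (intro fixby_le_superharmonic cir_potential_superharmonic)
         (simp_all add: cir_potential_nonneg cir_potential_univ)
    then show "fixby N (cir N 2) (cir N 1) t {i} \<le> 18 / 53" by simp
  qed
qed

end
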